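(* If all valuation functions are symmetric submodular (and the item cost functions are arbitrary non-decreasing functions $c_j:2^N\to\mathbb{R}_{\ge 0}$), then the mechanism IACSM is weakly group-strategyproof: for every coalition $Q\subseteq N$, every true symmetric submodular valuations $v_Q$ of $Q$, every symmetric submodular reports $v_{-Q}$ of the other players and every symmetric submodular misreport $b_Q$, there exists $i\in Q$ with $u_i(b_Q,v_{-Q})\le u_i(v_Q,v_{-Q})$.
   Context: Players $N=\{1,\dots,n\}$, items $M=\{1,\dots,m\}$. Valuations $v_i:2^M\to\mathbb{R}_{\ge0}$ are non-decreasing; symmetric means $f(S)=f(T)$ whenever $|S|=|T|$, submodular means $f(S\cup\{x\})-f(S)\ge f(T\cup\{x\})-f(T)$ for $S\subseteq T$, $x\notin T$. Given the declared profile, the mechanism outputs bundles $A_i$ and payments $p_i$; $u_i(\cdot)=v_i(A_i)-p_i$ measured with player $i$'s true valuation $v_i$. Mechanism IACSM (input: declared valuations $b$): maintain active set $X=N$, sets $T_j=N$ and cost shares $\chi_j=c_j(N)/n$ for all items $j$. While $X\neq\emptyset$: (1) every $i\in X$ computes $A_i\in\arg\max_{S\subseteq M}\{b_i(S)-\sum_{j\in S}\chi_j\}$, choosing among maximizers one of maximum cardinality $k$, and among those the $k$ items with smallest current $\chi_j$ (item ties by index); (2) choose $i^*\in X$ with $|A_{i^*}|$ minimum (ties by smallest index); (3) assign $A_{i^*}$ to $i^*$ permanently and remove $i^*$ from $X$; (4) for every item $j\notin A_{i^*}$ set $T_j:=T_j\setminus\{i^*\}$ and, if $T_j\ne\emptyset$,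 set $\chi_j:=\max\{\chi_j,c_j(T_j)/|T_j|\}$. Output the assigned bundles and payments $p_i=\sum_{j\in A_i}\chi_j$ with final cost shares. *)

theory Defs
  imports Complex_Main
begin

(* Players are N = {..<n}, items are M = {..<m} (index order = tie-breaking order).
   A valuation is a function nat set => real (only its values on subsets of M matter);
   a cost function c j :: nat set => real (only values on subsets of N matter). *)

definition nondecreasing_on :: "'a set \<Rightarrow> ('a set \<Rightarrow> real) \<Rightarrow> bool" where
  "nondecreasing_on U f \<longleftrightarrow> (\<forall>S T. S \<subseteq> T \<longrightarrow> T \<subseteq> U \<longrightarrow> f S \<le> f T)"

definition nonneg_on :: "'a set \<Rightarrow> ('a set \<Rightarrow> real) \<Rightarrow> bool" where
  "nonneg_on U f \<longleftrightarrow> (\<forall>S. S \<subseteq> U \<longrightarrow> 0 \<le> f S)"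

definition symmetric_on :: "'a set \<Rightarrow> ('a set \<Rightarrow> real) \<Rightarrow> bool" where
  "symmetric_on U f \<longleftrightarrow> (\<forall>S T. S \<subseteq> U \<longrightarrow> T \<subseteq> U \<longrightarrow> card S = card T \<longrightarrow> f S = f T)"

definition submodular_on :: "'a set \<Rightarrow> ('a set \<Rightarrow> real) \<Rightarrow> bool" where
  "submodular_on U f \<longleftrightarrow> (\<forall>S T x. S \<subseteq> T \<longrightarrow> T \<subseteq> U \<longrightarrow> x \<in> U \<longrightarrow> x \<notin> T \<longrightarrow>
      f (insert x S) - f S \<ge> f (insert x T) - f T)"

definition sym_submod_valuation :: "nat \<Rightarrow> (nat set \<Rightarrow> real) \<Rightarrow> bool" where
  "sym_submod_valuation m f \<longleftrightarrow> nonneg_on {..<m} f \<and> nondecreasing_on {..<m} f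
      \<and> symmetric_on {..<m} f \<and> submodular_on {..<m} f"

definition cheaper :: "(nat \<Rightarrow> real) \<Rightarrow> nat \<Rightarrow> nat \<Rightarrow> bool" where
  "cheaper chi j' j \<longleftrightarrow> chi j' < chi j \<or> (chi j' = chi j \<and> j' < j)"

definition net_value :: "(nat set \<Rightarrow> real) \<Rightarrow> (nat \<Rightarrow> real) \<Rightarrow> nat set \<Rightarrow> real" where
  "net_value f chi S = f S - sum chi S"

definition is_maximizer :: "nat \<Rightarrow> (nat set \<Rightarrow> real) \<Rightarrow> (nat \<Rightarrow> real) \<Rightarrow> nat set \<Rightarrow> bool" where
  "is_maximizer m f chi S \<longleftrightarrow> S \<subseteq> {..<m} \<and>
     (\<forall>S'. S' \<subseteq> {..<m} \<longrightarrow> net_value f chi S' \<le> net_value f chi S)"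

definition demand_size :: "nat \<Rightarrow> (nat set \<Rightarrow> real) \<Rightarrow> (nat \<Rightarrow> real) \<Rightarrow> nat" where
  "demand_size m f chi = Max (card ` {S. is_maximizer m f chi S})"

definition cheapest :: "nat \<Rightarrow> (nat \<Rightarrow> real) \<Rightarrow> nat \<Rightarrow> nat set" where
  "cheapest m chi k = {j \<in> {..<m}. card {j' \<in> {..<m}. cheaper chi j' j} < k}"

definition demand :: "nat \<Rightarrow> (nat set \<Rightarrow> real) \<Rightarrow> (nat \<Rightarrow> real) \<Rightarrow> nat set" where
  "demand m f chi = cheapest m chi (demand_size m f chi)"

record mstate =
  active :: "nat set"
  Tset   :: "nat \<Rightarrow> nat set"
  share  :: "nat \<Rightarrow> real"
  alloc  :: "nat \<Rightarrow> nat set"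

definition iacsm_init :: "nat \<Rightarrow> (nat \<Rightarrow> nat set \<Rightarrow> real) \<Rightarrow> mstate" where
  "iacsm_init n c = \<lparr> active = {..<n}, Tset = (\<lambda>j. {..<n}),
      share = (\<lambda>j. c j {..<n} / real n), alloc = (\<lambda>i. {}) \<rparr>"

definition iacsm_step :: "nat \<Rightarrow> (nat \<Rightarrow> nat set \<Rightarrow> real) \<Rightarrow> (nat \<Rightarrow> nat set \<Rightarrow> real)
    \<Rightarrow> mstate \<Rightarrow> mstate" where
  "iacsm_step m c b s =
    (if active s = {} then s else
     (let X = active s;
          D = (\<lambda>i. demand m (b i) (share s));
          istar = (LEAST i. i \<in> X \<and> (\<forall>i'\<in>X. card (D i) \<le> card (D i')));
          A = D istar;
          T' = (\<lambda>j. if j \<notin> A then Tset s j - {istar} else Tset s j);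
          chi' = (\<lambda>j. if j \<notin> A \<and> T' j \<noteq> {}
                       then max (share s j) (c j (T' j) / real (card (T' j)))
                       else share s j)
      in \<lparr> active = X - {istar}, Tset = T', share = chi', alloc = (alloc s)(istar := A) \<rparr>))"

(* each iteration removes exactly one player, so n iterations empty the active set *)
definition iacsm_final :: "nat \<Rightarrow> nat \<Rightarrow> (nat \<Rightarrow> nat set \<Rightarrow> real) \<Rightarrow> (nat \<Rightarrow> nat set \<Rightarrow> real)
    \<Rightarrow> mstate" where
  "iacsm_final n m c b = (iacsm_step m c b ^^ n) (iacsm_init n c)"

definition iacsm_bundle :: "nat \<Rightarrow> nat \<Rightarrow> (nat \<Rightarrow> nat set \<Rightarrow> real) \<Rightarrow> (nat \<Rightarrow> nat set \<Rightarrow> real)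
    \<Rightarrow> nat \<Rightarrow> nat set" where
  "iacsm_bundle n m c b i = alloc (iacsm_final n m c b) i"

definition iacsm_payment :: "nat \<Rightarrow> nat \<Rightarrow> (nat \<Rightarrow> nat set \<Rightarrow> real) \<Rightarrow> (nat \<Rightarrow> nat set \<Rightarrow> real)
    \<Rightarrow> nat \<Rightarrow> real" where
  "iacsm_payment n m c b i = (\<Sum>j\<in>iacsm_bundle n m c b i. share (iacsm_final n m c b) j)"

(* utility of player i with true valuation vi when the declared profile is b *)
definition iacsm_utility :: "nat \<Rightarrow> nat \<Rightarrow> (nat \<Rightarrow> nat set \<Rightarrow> real) \<Rightarrow> (nat set \<Rightarrow> real)
    \<Rightarrow> (nat \<Rightarrow> nat set \<Rightarrow> real) \<Rightarrow> nat \<Rightarrow> real" where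
  "iacsm_utility n m c vi b i = vi (iacsm_bundle n m c b i) - iacsm_payment n m c b i"

end

theory Submission
  imports Defs
begin

(* For a symmetric submodular valuation and fixed shares, the net value of the k cheapest items is
   concave in k, so a demanded bundle is a cheapest-first prefix and the profit increases up to
   the demand size. Along a run the shares only rise, and each assigned bundle is a prefix of every
   remaining player's demand; hence the shares of an assigned bundle are frozen and a truthful
   player's utility is its optimal net value at the moment it leaves.
   Compare the truthful and the deviating run at the first step where they differ. If the truthfully
   selected player is in the coalition, deviating can only make it pay higher shares for a bundle its
   truthful demand already beats. Otherwise the deviating run selects a coalition member i whose
   bundle is no larger than the truthfully selected bundle A; by concavity, truthful i does at least
   as well, since A stays available to it at frozen prices. *)

section \<open>Cheapest items\<close>

lemma cheaper_irrefl: "\<not> cheaper chi j j"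
  by (auto simp: cheaper_def)

lemma cheaper_trans: "cheaper chi a b \<Longrightarrow> cheaper chi b d \<Longrightarrow> cheaper chi a d"
  by (auto simp: cheaper_def)

lemma cheaper_total: "a \<noteq> b \<Longrightarrow> cheaper chi a b \<or> cheaper chi b a"
  by (auto simp: cheaper_def)

lemma cheaper_imp_le: "cheaper chi a b \<Longrightarrow> chi a \<le> chi b"
  by (auto simp: cheaper_def)

definition cheaper_rank :: "nat \<Rightarrow> (nat \<Rightarrow> real) \<Rightarrow> nat \<Rightarrow> nat" where
  "cheaper_rank m chi j = card {j' \<in> {..<m}. cheaper chi j' j}"

lemma cheapest_eq_rank: "cheapest m chi k = {j \<in> {..<m}. cheaper_rank m chi j < k}"
  by (simp add: cheapest_def cheaper_rank_def)

lemma cheaper_rank_less: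
  assumes "cheaper chi a b" "a < m"
  shows "cheaper_rank m chi a < cheaper_rank m chi b"
  unfolding cheaper_rank_def
proof (rule psubset_card_mono)
  show "{j' \<in> {..<m}. cheaper chi j' a} \<subset> {j' \<in> {..<m}. cheaper chi j' b}"
    using assms cheaper_trans[of chi _ a b] cheaper_irrefl[of chi a] by blast
qed simp

lemma cheaper_rank_less_card: "j < m \<Longrightarrow> cheaper_rank m chi j < m"
  unfolding cheaper_rank_def
  by (rule psubset_card_mono[where B = "{..<m}", simplified]) (use cheaper_irrefl in blast)

lemma inj_on_cheaper_rank: "inj_on (cheaper_rank m chi) {..<m}"
proof (rule inj_onI, rule ccontr)
  fix a b assume "a \<in> {..<m}" "b \<in> {..<m}" "cheaper_rank m chi a = cheaper_rank m chi b" "a \<noteq> b"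
  then show False
    using cheaper_total[of a b chi] cheaper_rank_less[of chi a b m] cheaper_rank_less[of chi b a m] by auto
qed

lemma cheaper_rank_image: "cheaper_rank m chi ` {..<m} = {..<m}"
proof -
  have "cheaper_rank m chi ` {..<m} \<subseteq> {..<m}" using cheaper_rank_less_card by auto
  moreover have "card (cheaper_rank m chi ` {..<m}) = card {..<m}"
    using inj_on_cheaper_rank card_image by blast
  ultimately show ?thesis by (simp add: card_subset_eq)
qed

lemma card_cheapest: "card (cheapest m chi k) = min k m"
proof -
  have "cheaper_rank m chi ` cheapest m chi k = {..<m} \<inter> {..<k}"
    using cheaper_rank_image[of m chi] unfolding cheapest_eq_rank by auto
  moreover have "inj_on (cheaper_rank m chi) (cheapest m chi k)"
    using inj_on_cheaper_rank by (rule inj_on_subset) (auto simp: cheapest_eq_rank)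
  ultimately have "card (cheapest m chi k) = card ({..<m} \<inter> {..<k})"
    by (metis card_image)
  also have "{..<m} \<inter> {..<k} = {..<min k m}" by auto
  finally show ?thesis by simp
qed

lemma cheapest_subset: "cheapest m chi k \<subseteq> {..<m}"
  by (auto simp: cheapest_def)

lemma finite_cheapest [simp]: "finite (cheapest m chi k)"
  by (rule finite_subset[OF cheapest_subset]) simp

lemma cheapest_mono: "k \<le> k' \<Longrightarrow> cheapest m chi k \<subseteq> cheapest m chi k'"
  by (auto simp: cheapest_def)

lemma cheaper_if_cheapest_notin:
  assumes "j \<in> cheapest m chi k" "j' < m" "j' \<notin> cheapest m chi k"
  shows "cheaper chi j j'"
proof -
  have "\<not> cheaper chi j' j"
  proof
    assume "cheaper chi j' j"
    then have "cheaper_rank m chi j' < cheaper_rank m chi j" using assms(2) by (rule cheaper_rank_less)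
    then show False using assms by (simp add: cheapest_eq_rank)
  qed
  then show ?thesis using assms cheaper_total[of j j' chi] by auto
qed

lemma sum_le_if_card_eq_elementwise_le:
  fixes f :: "'a \<Rightarrow> real"
  assumes "finite X" "card X = card Y" "\<And>x y. x \<in> X \<Longrightarrow> y \<in> Y \<Longrightarrow> f x \<le> f y"
  shows "sum f X \<le> sum f Y"
proof (cases "X = {}")
  case True
  then have "card Y = 0" using assms(2) by simp
  then show ?thesis using True by (cases "finite Y") auto
next
  case False
  define t where "t = Max (f ` X)"
  have "t \<in> f ` X" using False assms(1) by (simp add: t_def)
  then have t_le: "\<And>y. y \<in> Y \<Longrightarrow> t \<le> f y" using assms(3) by blast
  have "sum f X \<le> of_nat (card X) * t"
    using sum_bounded_above[of X f t] assms(1) by (simp add: t_def)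
  also have "\<dots> = of_nat (card Y) * t" using assms(2) by simp
  also have "\<dots> \<le> sum f Y"
    using sum_bounded_below[of Y t f] t_le by simp
  finally show ?thesis .
qed

lemma sum_cheapest_le:
  assumes S: "S \<subseteq> {..<m}" "card S = k"
  shows "sum chi (cheapest m chi k) \<le> sum chi S"
proof -
  define A where "A = cheapest m chi k"
  have "finite S" using S finite_subset by blast
  have "card A = k"
    using card_mono[OF finite_lessThan S(1)] S(2) card_cheapest[of m chi k] by (simp add: A_def)
  then have "card (A - S) = card (S - A)"
    using \<open>finite S\<close> S(2) by (simp add: card_Diff_subset_Int A_def Int_commute)
  then have "sum chi (A - S) \<le> sum chi (S - A)"
    using S(1) cheaper_if_cheapest_notin cheaper_imp_le
    by (intro sum_le_if_card_eq_elementwise_le) (auto simp: A_def)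
  moreover have "sum chi A = sum chi (A - S) + sum chi (A \<inter> S)"
    using sum.Int_Diff[of A chi S] by (simp add: A_def)
  moreover have "sum chi S = sum chi (S - A) + sum chi (A \<inter> S)"
    using \<open>finite S\<close> sum.Int_Diff[of S chi A] by (simp add: inf_commute)
  ultimately show ?thesis by (simp add: A_def)
qed

lemma cheapest_SucE:
  assumes "k < m"
  obtains x where "x < m" "x \<notin> cheapest m chi k" "cheapest m chi (Suc k) = insert x (cheapest m chi k)"
proof -
  have sub: "cheapest m chi k \<subseteq> cheapest m chi (Suc k)" by (rule cheapest_mono) simp
  then have "card (cheapest m chi (Suc k) - cheapest m chi k) = 1"
    using assms by (simp add: card_Diff_subset card_cheapest)
  then obtain x where x: "cheapest m chi (Suc k) - cheapest m chi k = {x}" by (rule card_1_singletonE)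
  show ?thesis
  proof (rule that)
    show "x < m" using x cheapest_subset by blast
    show "x \<notin> cheapest m chi k" using x by blast
    show "cheapest m chi (Suc k) = insert x (cheapest m chi k)" using x sub by blast
  qed
qed

lemma cheapest_raise_outside:
  assumes eq: "\<And>j. j \<in> cheapest m chi k \<Longrightarrow> chi' j = chi j"
    and ge: "\<And>j. chi j \<le> chi' j"
  shows "cheapest m chi' k = cheapest m chi k"
proof -
  define A where "A = cheapest m chi k"
  have same_order: "cheaper chi' j' j \<longleftrightarrow> cheaper chi j' j" if j: "j \<in> A" and j': "j' < m" for j j'
  proof (cases "j' \<in> A")
    case True
    then have "chi' j' = chi j'" "chi' j = chi j" using j eq by (simp_all add: A_def)
    then show ?thesis unfolding cheaper_def by simp
  next
    case False
    then have "cheaper chi j j'" using j j' cheaper_if_cheapest_notin by (simp add: A_def)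
    moreover have "chi' j = chi j" using j eq by (simp add: A_def)
    ultimately show ?thesis using ge[of j'] unfolding cheaper_def by linarith
  qed
  have "A \<subseteq> cheapest m chi' k"
  proof
    fix j assume j: "j \<in> A"
    have "{j' \<in> {..<m}. cheaper chi' j' j} = {j' \<in> {..<m}. cheaper chi j' j}"
      using same_order[OF j] by blast
    then show "j \<in> cheapest m chi' k" using j by (simp add: A_def cheapest_def)
  qed
  moreover have "card A = card (cheapest m chi' k)" by (simp add: A_def card_cheapest)
  ultimately show ?thesis using card_subset_eq[OF finite_cheapest] by (metis A_def)
qed

section \<open>Demand of a symmetric submodular valuation\<close>

abbreviation cheapest_profit :: "nat \<Rightarrow> (nat set \<Rightarrow> real) \<Rightarrow> (nat \<Rightarrow> real) \<Rightarrow> nat \<Rightarrow> real" where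
  "cheapest_profit m f chi k \<equiv> net_value f chi (cheapest m chi k)"

(* With S \<subset> T the k and k+1 cheapest items, T = S + x and y the next item: symmetry gives
   f (S + y) = f T, submodularity bounds the marginal value of y at T by that at S, and chi x \<le> chi y. *)
lemma cheapest_profit_concave:
  assumes sym: "symmetric_on {..<m} f" and submod: "submodular_on {..<m} f"
    and k: "Suc (Suc k) \<le> m"
  shows "cheapest_profit m f chi (Suc (Suc k)) - cheapest_profit m f chi (Suc k)
    \<le> cheapest_profit m f chi (Suc k) - cheapest_profit m f chi k"
proof -
  define S where "S = cheapest m chi k"
  define T where "T = cheapest m chi (Suc k)"
  have "k < m" "Suc k < m" using k by simp_all
  obtain x where x: "x < m" "x \<notin> S" "T = insert x S"
    unfolding S_def T_def using \<open>k < m\<close> by (rule cheapest_SucE)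
  obtain y where y: "y < m" "y \<notin> T" "cheapest m chi (Suc (Suc k)) = insert y T"
    unfolding T_def using \<open>Suc k < m\<close> by (rule cheapest_SucE)
  have "T \<subseteq> {..<m}" by (simp add: T_def cheapest_subset)
  have "finite S" by (simp add: S_def)
  have "y \<notin> S" using x(3) y(2) by blast
  have "S \<subseteq> T" using x(3) by blast
  then have "f (insert y S) - f S \<ge> f (insert y T) - f T"
    using submod[unfolded submodular_on_def, rule_format, of S T y] \<open>T \<subseteq> {..<m}\<close> y(1,2) by simp
  moreover have "f (insert y S) = f T"
  proof -
    have "card (insert y S) = card T"
      using \<open>finite S\<close> \<open>y \<notin> S\<close> x(2,3) by simp
    moreover have "insert y S \<subseteq> {..<m}" using x(3) y(1) \<open>T \<subseteq> {..<m}\<close> by blast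
    ultimately show ?thesis
      using sym[unfolded symmetric_on_def, rule_format, of "insert y S" T] \<open>T \<subseteq> {..<m}\<close> by simp
  qed
  moreover have "chi x \<le> chi y"
    using cheaper_if_cheapest_notin[of x m chi "Suc k" y] cheaper_imp_le x y by (auto simp: T_def)
  ultimately show ?thesis
    using x y \<open>finite S\<close> unfolding net_value_def S_def[symmetric] T_def[symmetric]
    by simp
qed

lemma cheapest_profit_increment_antimono:
  assumes sym: "symmetric_on {..<m} f" and submod: "submodular_on {..<m} f"
    and "j \<le> l" "Suc l \<le> m"
  shows "cheapest_profit m f chi (Suc l) - cheapest_profit m f chi l
    \<le> cheapest_profit m f chi (Suc j) - cheapest_profit m f chi j"
  using assms(3,4)
proof (induction l rule: dec_induct)
  case base
  then show ?case by simp
next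
  case (step l)
  then show ?case using cheapest_profit_concave[OF sym submod, of l chi] by simp
qed

lemma cheapest_profit_mono_below_max:
  assumes sym: "symmetric_on {..<m} f" and submod: "submodular_on {..<m} f"
    and K: "K \<le> m" and max: "\<And>j. j \<le> m \<Longrightarrow> cheapest_profit m f chi j \<le> cheapest_profit m f chi K"
    and "a \<le> b" "b \<le> K"
  shows "cheapest_profit m f chi a \<le> cheapest_profit m f chi b"
proof -
  have increase: "cheapest_profit m f chi j \<le> cheapest_profit m f chi (Suc j)" if "j < K" for j
  proof (rule ccontr)
    assume decrease: "\<not> ?thesis"
    have "cheapest_profit m f chi l \<le> cheapest_profit m f chi (Suc j)" if "Suc j \<le> l" "l \<le> K" for l
      using that
    proof (induction l rule: dec_induct)
      case (step l)
      then show ?case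
        using cheapest_profit_increment_antimono[OF sym submod, of j l chi] K decrease by simp
    qed simp
    then have "cheapest_profit m f chi K \<le> cheapest_profit m f chi (Suc j)"
      using \<open>j < K\<close> by simp
    then have "cheapest_profit m f chi K < cheapest_profit m f chi j" using decrease by simp
    then show False using max[of j] \<open>j < K\<close> K by simp
  qed
  show ?thesis
    using assms(5,6)
  proof (induction b rule: dec_induct)
    case (step b)
    then show ?case using increase[of b] by simp
  qed simp
qed

lemma ex_maximizer: "\<exists>S. is_maximizer m f chi S"
proof -
  define M where "M = Max (net_value f chi ` Pow {..<m})"
  have fin: "finite (net_value f chi ` Pow {..<m})" by simp
  have "M \<in> net_value f chi ` Pow {..<m}" unfolding M_def by (rule Max_in[OF fin]) blast
  then obtain S where S: "S \<subseteq> {..<m}" "net_value f chi S = M" by auto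
  have "\<And>S'. S' \<subseteq> {..<m} \<Longrightarrow> net_value f chi S' \<le> M"
    unfolding M_def by (rule Max_ge[OF fin]) simp
  then show ?thesis using S unfolding is_maximizer_def by metis
qed

lemma finite_maximizers: "finite {S. is_maximizer m f chi S}"
  by (rule finite_subset[of _ "Pow {..<m}"]) (auto simp: is_maximizer_def)

lemma demand_size_attained:
  obtains S where "is_maximizer m f chi S" "card S = demand_size m f chi"
proof -
  have "card ` {S. is_maximizer m f chi S} \<noteq> {}" using ex_maximizer by blast
  then have "demand_size m f chi \<in> card ` {S. is_maximizer m f chi S}"
    unfolding demand_size_def using finite_maximizers by (intro Max_in) auto
  then obtain S where "is_maximizer m f chi S" "card S = demand_size m f chi" by auto
  then show ?thesis by (rule that)
qed

lemma card_maximizer_le_demand_size: "is_maximizer m f chi S \<Longrightarrow> card S \<le> demand_size m f chi"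
  unfolding demand_size_def using finite_maximizers by (intro Max_ge) auto

lemma is_maximizer_if_ge:
  assumes "is_maximizer m f chi S" "A \<subseteq> {..<m}" "net_value f chi S \<le> net_value f chi A"
  shows "is_maximizer m f chi A"
  using assms unfolding is_maximizer_def by (meson order_trans)

lemma demand_size_le: "demand_size m f chi \<le> m"
proof -
  obtain S where "is_maximizer m f chi S" "card S = demand_size m f chi"
    by (rule demand_size_attained)
  then show ?thesis
    using card_mono[of "{..<m}" S] by (simp add: is_maximizer_def)
qed

lemma card_demand: "card (demand m f chi) = demand_size m f chi"
  unfolding demand_def using demand_size_le[of m f chi] by (simp add: card_cheapest)

lemma demand_eq_cheapest_card: "demand m f chi = cheapest m chi (card (demand m f chi))"
  by (simp only: card_demand) (simp add: demand_def)

lemma demand_subset: "demand m f chi \<subseteq> {..<m}"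
  unfolding demand_def by (rule cheapest_subset)

lemma net_value_le_cheapest_profit:
  assumes sym: "symmetric_on {..<m} f" and S: "S \<subseteq> {..<m}"
  shows "net_value f chi S \<le> cheapest_profit m f chi (card S)"
proof -
  have "card S \<le> m" using card_mono[OF finite_lessThan S] by simp
  then have "f (cheapest m chi (card S)) = f S"
    using sym[unfolded symmetric_on_def, rule_format, of "cheapest m chi (card S)" S] S
    by (simp add: cheapest_subset card_cheapest)
  moreover have "sum chi (cheapest m chi (card S)) \<le> sum chi S"
    using S by (rule sum_cheapest_le) simp
  ultimately show ?thesis by (simp add: net_value_def)
qed

lemma demand_is_maximizer:
  assumes sym: "symmetric_on {..<m} f"
  shows "is_maximizer m f chi (demand m f chi)"
proof -
  obtain S where S: "is_maximizer m f chi S" "card S = demand_size m f chi"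
    by (rule demand_size_attained)
  then have "net_value f chi S \<le> net_value f chi (demand m f chi)"
    using net_value_le_cheapest_profit[OF sym, of S chi] by (simp add: is_maximizer_def demand_def)
  with S(1) demand_subset show ?thesis by (rule is_maximizer_if_ge)
qed

lemma cheapest_profit_mono_below_demand_size:
  assumes sym: "symmetric_on {..<m} f" and submod: "submodular_on {..<m} f"
    and "a \<le> b" "b \<le> demand_size m f chi"
  shows "cheapest_profit m f chi a \<le> cheapest_profit m f chi b"
proof (rule cheapest_profit_mono_below_max[OF sym submod demand_size_le _ assms(3,4)])
  fix j
  show "cheapest_profit m f chi j \<le> cheapest_profit m f chi (demand_size m f chi)"
    using demand_is_maximizer[OF sym, of chi] cheapest_subset[of m chi j]
    unfolding is_maximizer_def demand_def by blast
qed

lemma demand_size_ge_after_raise: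
  assumes sym: "symmetric_on {..<m} f" and submod: "submodular_on {..<m} f"
    and k: "k \<le> demand_size m f chi"
    and eq: "\<And>j. j \<in> cheapest m chi k \<Longrightarrow> chi' j = chi j"
    and ge: "\<And>j. chi j \<le> chi' j"
  shows "k \<le> demand_size m f chi'"
proof (rule ccontr)
  assume "\<not> ?thesis"
  then have less: "demand_size m f chi' < k" by simp
  obtain S where S: "is_maximizer m f chi' S" "card S = demand_size m f chi'"
    by (rule demand_size_attained)
  have "net_value f chi' S \<le> net_value f chi S"
    using ge by (simp add: net_value_def sum_mono)
  also have "\<dots> \<le> cheapest_profit m f chi (card S)"
    using net_value_le_cheapest_profit[OF sym] S(1) by (simp add: is_maximizer_def)
  also have "\<dots> \<le> cheapest_profit m f chi k"
    using cheapest_profit_mono_below_demand_size[OF sym submod _ k] less S(2) by simp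
  also have "\<dots> = net_value f chi' (cheapest m chi k)"
    using eq by (simp add: net_value_def)
  finally have "is_maximizer m f chi' (cheapest m chi k)"
    by (rule is_maximizer_if_ge[OF S(1) cheapest_subset])
  then have "card (cheapest m chi k) \<le> demand_size m f chi'"
    by (rule card_maximizer_le_demand_size)
  moreover have "card (cheapest m chi k) = k"
    using k demand_size_le[of m f chi] by (simp add: card_cheapest)
  ultimately show False using less by simp
qed

section \<open>Runs of the mechanism\<close>

definition selected :: "nat \<Rightarrow> (nat \<Rightarrow> nat set \<Rightarrow> real) \<Rightarrow> mstate \<Rightarrow> nat" where
  "selected m p s = (LEAST i. i \<in> active s \<and> (\<forall>i'\<in>active s.
      card (demand m (p i) (share s)) \<le> card (demand m (p i') (share s))))"

definition assign :: "(nat \<Rightarrow> nat set \<Rightarrow> real) \<Rightarrow> mstate \<Rightarrow> nat \<Rightarrow> nat set \<Rightarrow> mstate" where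
  "assign c s i A = (let T' = (\<lambda>j. if j \<notin> A then Tset s j - {i} else Tset s j);
     chi' = (\<lambda>j. if j \<notin> A \<and> T' j \<noteq> {} then max (share s j) (c j (T' j) / real (card (T' j)))
                 else share s j)
   in \<lparr>active = active s - {i}, Tset = T', share = chi', alloc = (alloc s)(i := A)\<rparr>)"

lemma iacsm_step_assign:
  "active s \<noteq> {} \<Longrightarrow>
    iacsm_step m c p s = assign c s (selected m p s) (demand m (p (selected m p s)) (share s))"
  by (simp add: iacsm_step_def assign_def selected_def Let_def)

lemma iacsm_step_idle: "active s = {} \<Longrightarrow> iacsm_step m c p s = s"
  by (simp add: iacsm_step_def)

lemma selected_spec:
  assumes "active s \<noteq> {}"
  shows "selected m p s \<in> active s \<and> (\<forall>i\<in>active s.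
      card (demand m (p (selected m p s)) (share s)) \<le> card (demand m (p i) (share s)))"
proof -
  obtain i0 where "i0 \<in> active s" using assms by blast
  then obtain i where i: "i \<in> active s"
    "\<forall>i'. i' \<in> active s \<longrightarrow> card (demand m (p i) (share s)) \<le> card (demand m (p i') (share s))"
    using ex_has_least_nat[of "\<lambda>i. i \<in> active s" i0 "\<lambda>i. card (demand m (p i) (share s))"] by blast
  show ?thesis unfolding selected_def by (rule LeastI[of _ i]) (use i in blast)
qed

lemma selected_in_active: "active s \<noteq> {} \<Longrightarrow> selected m p s \<in> active s"
  using selected_spec by simp

lemma card_demand_selected_le:
  "i \<in> active s \<Longrightarrow> card (demand m (p (selected m p s)) (share s)) \<le> card (demand m (p i) (share s))"
  using selected_spec[of s m p] by auto

lemma selected_le: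
  "i \<in> active s \<Longrightarrow> (\<And>i'. i' \<in> active s \<Longrightarrow>
      card (demand m (p i) (share s)) \<le> card (demand m (p i') (share s)))
    \<Longrightarrow> selected m p s \<le> i"
  unfolding selected_def by (rule Least_le) blast

lemma active_assign [simp]: "active (assign c s i A) = active s - {i}"
  and alloc_assign [simp]: "alloc (assign c s i A) = (alloc s)(i := A)"
  and share_assign_ge: "share s j \<le> share (assign c s i A) j"
  and share_assign_bundle: "j \<in> A \<Longrightarrow> share (assign c s i A) j = share s j"
  by (simp_all add: assign_def Let_def)

lemma active_iacsm_step_subset: "active (iacsm_step m c p s) \<subseteq> active s"
  by (cases "active s = {}") (auto simp: iacsm_step_idle iacsm_step_assign)

lemma share_iacsm_step_ge: "share s j \<le> share (iacsm_step m c p s) j"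
  by (cases "active s = {}") (auto simp: iacsm_step_idle iacsm_step_assign share_assign_ge)

lemma alloc_iacsm_step_inactive:
  assumes "i \<notin> active s"
  shows "alloc (iacsm_step m c p s) i = alloc s i"
proof (cases "active s = {}")
  case False
  then have "selected m p s \<noteq> i" using selected_in_active assms by metis
  with False show ?thesis by (simp add: iacsm_step_assign)
qed (simp add: iacsm_step_idle)

lemma departure:
  assumes "i \<in> active s" "i \<notin> active (iacsm_step m c p s)"
  shows "active s \<noteq> {}" "i = selected m p s"
    and "alloc (iacsm_step m c p s) i = demand m (p i) (share s)"
proof -
  show ne: "active s \<noteq> {}" using assms by auto
  then show "i = selected m p s" using assms by (simp add: iacsm_step_assign)
  then show "alloc (iacsm_step m c p s) i = demand m (p i) (share s)"
    using ne by (simp add: iacsm_step_assign)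
qed

definition run :: "nat \<Rightarrow> nat \<Rightarrow> (nat \<Rightarrow> nat set \<Rightarrow> real) \<Rightarrow> (nat \<Rightarrow> nat set \<Rightarrow> real) \<Rightarrow> nat \<Rightarrow> mstate"
  where "run n m c p t = (iacsm_step m c p ^^ t) (iacsm_init n c)"

lemma run_0: "run n m c p 0 = iacsm_init n c"
  by (simp add: run_def)

lemma run_Suc: "run n m c p (Suc t) = iacsm_step m c p (run n m c p t)"
  by (simp add: run_def)

lemma active_run_antimono: "t \<le> t' \<Longrightarrow> active (run n m c p t') \<subseteq> active (run n m c p t)"
proof (induction t' rule: dec_induct)
  case (step l)
  then show ?case using active_iacsm_step_subset[of m c p "run n m c p l"] by (simp add: run_Suc)
qed simp

lemma active_run_subset: "active (run n m c p t) \<subseteq> {..<n}"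
  using active_run_antimono[of 0 t n m c p] by (simp add: run_0 iacsm_init_def)

lemma card_active_run: "card (active (run n m c p t)) = n - t"
proof (induction t)
  case 0
  then show ?case by (simp add: run_0 iacsm_init_def)
next
  case (Suc t)
  show ?case
  proof (cases "active (run n m c p t) = {}")
    case True
    then show ?thesis using Suc by (simp add: run_Suc iacsm_step_idle)
  next
    case False
    have "finite (active (run n m c p t))" by (rule finite_subset[OF active_run_subset]) simp
    then show ?thesis
      using False Suc selected_in_active[OF False] by (simp add: run_Suc iacsm_step_assign)
  qed
qed

lemma active_run_final: "active (run n m c p n) = {}"
proof -
  have "finite (active (run n m c p n))" by (rule finite_subset[OF active_run_subset]) simp
  then show ?thesis using card_active_run[of n m c p n] by simp
qed

lemma share_run_mono: "t \<le> t' \<Longrightarrow> share (run n m c p t) j \<le> share (run n m c p t') j"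
proof (induction t' rule: dec_induct)
  case (step l)
  then show ?case using share_iacsm_step_ge[of "run n m c p l" j m c p] by (simp add: run_Suc)
qed simp

lemma alloc_run_subset: "alloc (run n m c p t) i \<subseteq> {..<m}"
proof (induction t)
  case (Suc t)
  then show ?case
    by (cases "active (run n m c p t) = {}")
       (simp_all add: run_Suc iacsm_step_idle iacsm_step_assign demand_subset)
qed (simp add: run_0 iacsm_init_def)

lemma alloc_run_inactive:
  assumes "i \<notin> active (run n m c p t)" "t \<le> t'"
  shows "alloc (run n m c p t') i = alloc (run n m c p t) i"
  using assms(2)
proof (induction t' rule: dec_induct)
  case (step l)
  have "i \<notin> active (run n m c p l)" using active_run_antimono[of t l n m c p] step assms(1) by auto
  then show ?case using step alloc_iacsm_step_inactive by (simp add: run_Suc)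
qed simp

lemma departure_timeE:
  assumes "i < n"
  obtains \<tau> where "\<tau> < n" "i \<in> active (run n m c p \<tau>)" "i \<notin> active (run n m c p (Suc \<tau>))"
proof -
  have "i \<notin> active (run n m c p n)" using active_run_final by simp
  moreover have "i \<in> active (run n m c p 0)" using assms by (simp add: run_0 iacsm_init_def)
  ultimately obtain \<tau> where "\<tau> < n" "\<forall>l\<le>\<tau>. i \<in> active (run n m c p l)"
      "i \<notin> active (run n m c p (Suc \<tau>))"
    using ex_least_nat_less[of "\<lambda>t. i \<notin> active (run n m c p t)" n] by blast
  then show ?thesis using that by blast
qed

section \<open>Frozen cost shares\<close>

definition sym_submod_profile :: "nat \<Rightarrow> nat \<Rightarrow> (nat \<Rightarrow> nat set \<Rightarrow> real) \<Rightarrow> bool" where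
  "sym_submod_profile n m p \<longleftrightarrow> (\<forall>i<n. sym_submod_valuation m (p i))"

lemma sym_submod_valuationD:
  assumes "sym_submod_valuation m f"
  shows "symmetric_on {..<m} f" "submodular_on {..<m} f"
  using assms by (simp_all add: sym_submod_valuation_def)

lemma sym_submod_profile_active:
  "sym_submod_profile n m p \<Longrightarrow> i \<in> active (run n m c p t) \<Longrightarrow> sym_submod_valuation m (p i)"
  using active_run_subset[of n m c p t] by (auto simp: sym_submod_profile_def)

(* Holds for the bundle F assigned last; it forces every later bundle to contain F, so the shares
   of F, which an assignment of a superset leaves unchanged, are frozen from then on. *)
definition demand_prefix :: "nat \<Rightarrow> (nat \<Rightarrow> nat set \<Rightarrow> real) \<Rightarrow> mstate \<Rightarrow> nat set \<Rightarrow> bool" where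
  "demand_prefix m p s F \<longleftrightarrow> F = cheapest m (share s) (card F) \<and> card F \<le> m \<and>
     (\<forall>i\<in>active s. card F \<le> demand_size m (p i) (share s))"

lemma demand_prefix_init: "demand_prefix m p (iacsm_init n c) {}"
  by (simp add: demand_prefix_def cheapest_def)

lemma demand_prefix_step:
  assumes valid: "\<And>i. i \<in> active s \<Longrightarrow> sym_submod_valuation m (p i)"
    and ne: "active s \<noteq> {}" and prefix: "demand_prefix m p s F"
  defines "A \<equiv> demand m (p (selected m p s)) (share s)"
  shows "F \<subseteq> A" and "demand_prefix m p (iacsm_step m c p s) A"
    and "\<And>j. j \<in> A \<Longrightarrow> share (iacsm_step m c p s) j = share s j"
proof -
  define i where "i = selected m p s"
  define chi where "chi = share s"
  define chi' where "chi' = share (iacsm_step m c p s)"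
  have step: "iacsm_step m c p s = assign c s i A"
    using ne by (simp add: iacsm_step_assign i_def A_def)
  show frozen: "\<And>j. j \<in> A \<Longrightarrow> share (iacsm_step m c p s) j = share s j"
    by (simp add: step share_assign_bundle)
  have raised: "\<And>j. chi j \<le> chi' j" by (simp add: chi_def chi'_def share_iacsm_step_ge)
  have "i \<in> active s" using selected_in_active[OF ne] by (simp add: i_def)
  have card_A: "card A = demand_size m (p i) chi" by (simp add: A_def i_def chi_def card_demand)
  have A_cheapest: "A = cheapest m chi (card A)"
    unfolding A_def chi_def by (rule demand_eq_cheapest_card)
  show "F \<subseteq> A"
    using prefix \<open>i \<in> active s\<close> cheapest_mono[of "card F" "demand_size m (p i) chi" m chi]
    by (auto simp: demand_prefix_def A_def i_def chi_def demand_def)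
  have "cheapest m chi' (card A) = A"
    using cheapest_raise_outside[of m chi "card A" chi'] frozen raised A_cheapest
    by (simp add: chi_def chi'_def)
  moreover have "card A \<le> demand_size m (p i') chi'" if "i' \<in> active (iacsm_step m c p s)" for i'
  proof -
    have "i' \<in> active s" using that by (simp add: step)
    then have "card A \<le> demand_size m (p i') chi"
      using card_demand_selected_le[of i' s m p] by (simp add: A_def i_def chi_def card_demand)
    moreover note demand_size_ge_after_raise[OF sym_submod_valuationD[OF valid[OF \<open>i' \<in> active s\<close>]],
        of "card A" chi chi']
    ultimately show ?thesis
      using frozen raised A_cheapest by (simp add: chi_def chi'_def)
  qed
  ultimately show "demand_prefix m p (iacsm_step m c p s) A"
    using demand_size_le[of m "p i" chi] card_A by (simp add: demand_prefix_def chi'_def)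
qed

lemma demand_prefix_run:
  assumes "sym_submod_profile n m p"
  shows "\<exists>F. demand_prefix m p (run n m c p t) F"
proof (induction t)
  case 0
  then show ?case using demand_prefix_init[of m p n c] by (auto simp: run_0)
next
  case (Suc t)
  then obtain F where F: "demand_prefix m p (run n m c p t) F" by blast
  show ?case
  proof (cases "active (run n m c p t) = {}")
    case True
    then show ?thesis using F by (auto simp: run_Suc iacsm_step_idle)
  next
    case False
    then show ?thesis
      using demand_prefix_step(2)[OF sym_submod_profile_active[OF assms, where c = c and t = t] False F]
      by (auto simp: run_Suc)
  qed
qed

lemma share_run_frozen:
  assumes valid: "sym_submod_profile n m p"
    and ne: "active (run n m c p \<tau>) \<noteq> {}" and "\<tau> \<le> t"
    and j: "j \<in> demand m (p (selected m p (run n m c p \<tau>))) (share (run n m c p \<tau>))"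
  shows "share (run n m c p t) j = share (run n m c p \<tau>) j"
proof -
  define A where "A = demand m (p (selected m p (run n m c p \<tau>))) (share (run n m c p \<tau>))"
  have frozen_after: "\<exists>F. A \<subseteq> F \<and> demand_prefix m p (run n m c p t) F \<and>
      (\<forall>j\<in>A. share (run n m c p t) j = share (run n m c p \<tau>) j)" if "Suc \<tau> \<le> t" for t
    using that
  proof (induction t rule: dec_induct)
    case base
    obtain F where "demand_prefix m p (run n m c p \<tau>) F" using demand_prefix_run[OF valid] by blast
    note first_step =
      demand_prefix_step[OF sym_submod_profile_active[OF valid, where c = c and t = \<tau>] ne this]
    have "demand_prefix m p (run n m c p (Suc \<tau>)) A"
      "\<forall>j\<in>A. share (run n m c p (Suc \<tau>)) j = share (run n m c p \<tau>) j"
      using first_step(2,3) unfolding run_Suc A_def by blast+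
    then show ?case by blast
  next
    case (step t)
    then obtain F where F: "A \<subseteq> F" "demand_prefix m p (run n m c p t) F"
      "\<forall>j\<in>A. share (run n m c p t) j = share (run n m c p \<tau>) j" by blast
    show ?case
    proof (cases "active (run n m c p t) = {}")
      case True
      then show ?thesis using F by (auto simp: run_Suc iacsm_step_idle)
    next
      case False
      define A' where "A' = demand m (p (selected m p (run n m c p t))) (share (run n m c p t))"
      note next_step =
        demand_prefix_step[OF sym_submod_profile_active[OF valid, where c = c and t = t] False F(2),
          folded A'_def]
      have "A \<subseteq> A'" using F(1) next_step(1) by blast
      moreover have "\<forall>j\<in>A. share (run n m c p (Suc t)) j = share (run n m c p \<tau>) j"
        using F(3) next_step(3) \<open>A \<subseteq> A'\<close> by (auto simp: run_Suc)
      ultimately show ?thesis using next_step(2) by (auto simp: run_Suc)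
    qed
  qed
  show ?thesis
  proof (cases "t = \<tau>")
    case False
    then have "Suc \<tau> \<le> t" using \<open>\<tau> \<le> t\<close> by simp
    then show ?thesis using frozen_after j unfolding A_def by blast
  qed simp
qed

section \<open>Utilities and the first divergence\<close>

lemma iacsm_utility_run:
  "iacsm_utility n m c vi p i =
    vi (alloc (run n m c p n) i) - sum (share (run n m c p n)) (alloc (run n m c p n) i)"
  by (simp add: iacsm_utility_def iacsm_payment_def iacsm_bundle_def iacsm_final_def run_def)

lemma iacsm_utility_le_earlier_shares:
  assumes "t \<le> n"
  shows "iacsm_utility n m c vi p i \<le> net_value vi (share (run n m c p t)) (alloc (run n m c p n) i)"
proof -
  have "sum (share (run n m c p t)) (alloc (run n m c p n) i)
      \<le> sum (share (run n m c p n)) (alloc (run n m c p n) i)"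
    using share_run_mono[OF assms] by (intro sum_mono)
  then show ?thesis by (simp add: iacsm_utility_run net_value_def)
qed

lemma iacsm_utility_truthful:
  assumes valid: "sym_submod_profile n m p" and "\<tau> < n"
    and "i \<in> active (run n m c p \<tau>)" "i \<notin> active (run n m c p (Suc \<tau>))"
  shows "iacsm_utility n m c (p i) p i =
    net_value (p i) (share (run n m c p \<tau>)) (demand m (p i) (share (run n m c p \<tau>)))"
proof -
  note leaves = departure[OF assms(3) assms(4)[unfolded run_Suc]]
  have "alloc (run n m c p n) i = demand m (p i) (share (run n m c p \<tau>))"
    using alloc_run_inactive[OF assms(4), of n] leaves(3) \<open>\<tau> < n\<close> by (simp add: run_Suc)
  moreover have "sum (share (run n m c p n)) (demand m (p i) (share (run n m c p \<tau>)))
      = sum (share (run n m c p \<tau>)) (demand m (p i) (share (run n m c p \<tau>)))"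
    using share_run_frozen[OF valid leaves(1), of n] leaves(2) \<open>\<tau> < n\<close> by (intro sum.cong) auto
  ultimately show ?thesis by (simp add: iacsm_utility_run net_value_def)
qed

lemma truthful_utility_ge_assigned_bundle:
  assumes valid: "sym_submod_profile n m v" and i: "i \<in> active (run n m c v t)"
  defines "A \<equiv> demand m (v (selected m v (run n m c v t))) (share (run n m c v t))"
  shows "net_value (v i) (share (run n m c v t)) A \<le> iacsm_utility n m c (v i) v i"
proof -
  have "i < n" using i active_run_subset by blast
  then obtain \<tau> where \<tau>: "\<tau> < n" "i \<in> active (run n m c v \<tau>)" "i \<notin> active (run n m c v (Suc \<tau>))"
    by (rule departure_timeE)
  have "t \<le> \<tau>"
  proof (rule ccontr)
    assume "\<not> t \<le> \<tau>"
    then have "active (run n m c v t) \<subseteq> active (run n m c v (Suc \<tau>))" by (intro active_run_antimono) simp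
    then show False using \<tau>(3) i by blast
  qed
  define chi where "chi = share (run n m c v \<tau>)"
  have "sum chi A = sum (share (run n m c v t)) A"
    using share_run_frozen[OF valid _ \<open>t \<le> \<tau>\<close>] i unfolding chi_def A_def by (intro sum.cong) auto
  then have "net_value (v i) (share (run n m c v t)) A = net_value (v i) chi A"
    by (simp add: net_value_def)
  also have "\<dots> \<le> net_value (v i) chi (demand m (v i) chi)"
    using demand_is_maximizer[OF sym_submod_valuationD(1)[OF sym_submod_profile_active[OF valid \<tau>(2)]],
        of chi] demand_subset[of m _ "share (run n m c v t)"]
    unfolding is_maximizer_def A_def by blast
  also have "\<dots> = iacsm_utility n m c (v i) v i"
    using iacsm_utility_truthful[OF valid \<tau>] by (simp add: chi_def)
  finally show ?thesis .
qed

lemma first_divergenceE: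
  assumes "run n m c p n \<noteq> run n m c q n"
  obtains t where "t < n" "run n m c p t = run n m c q t" "run n m c p (Suc t) \<noteq> run n m c q (Suc t)"
proof -
  have "run n m c p 0 = run n m c q 0" by (simp add: run_0)
  then obtain t where "t < n" "\<forall>l\<le>t. run n m c p l = run n m c q l"
      "run n m c p (Suc t) \<noteq> run n m c q (Suc t)"
    using ex_least_nat_less[of "\<lambda>t. run n m c p t \<noteq> run n m c q t" n] assms by blast
  then show ?thesis using that by blast
qed

lemma iacsm_step_eq_if_selected_agree:
  assumes agree1: "p (selected m v s) = v (selected m v s)"
    and agree2: "p (selected m p s) = v (selected m p s)"
  shows "iacsm_step m c p s = iacsm_step m c v s"
proof (cases "active s = {}")
  case False
  define i1 where "i1 = selected m v s"
  define i2 where "i2 = selected m p s"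
  have "i1 \<in> active s" "i2 \<in> active s"
    using selected_in_active[OF False] by (simp_all add: i1_def i2_def)
  define D where "D = (\<lambda>f. card (demand m f (share s)))"
  have min1: "\<And>i. i \<in> active s \<Longrightarrow> D (v i1) \<le> D (v i)"
    and min2: "\<And>i. i \<in> active s \<Longrightarrow> D (p i2) \<le> D (p i)"
    using card_demand_selected_le unfolding D_def i1_def i2_def by blast+
  have "D (v i2) = D (v i1)"
    using min1[OF \<open>i2 \<in> active s\<close>] min2[OF \<open>i1 \<in> active s\<close>] agree1 agree2
    by (simp add: i1_def i2_def)
  then have "i1 \<le> i2" "i2 \<le> i1"
    using selected_le[of i2 s m v] selected_le[of i1 s m p] min1 min2 agree1 agree2
      \<open>i1 \<in> active s\<close> \<open>i2 \<in> active s\<close> unfolding D_def i1_def i2_def by force+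
  then have "selected m p s = selected m v s" by (simp add: i1_def i2_def)
  then show ?thesis using False agree1 by (simp add: iacsm_step_assign)
qed (simp add: iacsm_step_idle)

lemma selected_truthful_no_gain:
  assumes valid: "sym_submod_profile n m v" and "t < n"
    and same: "run n m c p t = run n m c v t" and ne: "active (run n m c v t) \<noteq> {}"
  defines "i \<equiv> selected m v (run n m c v t)"
  shows "iacsm_utility n m c (v i) p i \<le> iacsm_utility n m c (v i) v i"
proof -
  define chi where "chi = share (run n m c v t)"
  have "i \<in> active (run n m c v t)" "i \<notin> active (run n m c v (Suc t))"
    using selected_in_active[OF ne] ne by (simp_all add: i_def run_Suc iacsm_step_assign)
  note truthful = iacsm_utility_truthful[OF valid \<open>t < n\<close> this]
  have "iacsm_utility n m c (v i) p i \<le> net_value (v i) chi (alloc (run n m c p n) i)"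
    using iacsm_utility_le_earlier_shares[OF less_imp_le[OF \<open>t < n\<close>], of m c "v i" p i]
    unfolding same chi_def .
  also have "\<dots> \<le> net_value (v i) chi (demand m (v i) chi)"
    using demand_is_maximizer[OF sym_submod_valuationD(1)[OF sym_submod_profile_active[OF valid
        \<open>i \<in> active (run n m c v t)\<close>]], of chi] alloc_run_subset[of n m c p n i]
    unfolding is_maximizer_def by blast
  also have "\<dots> = iacsm_utility n m c (v i) v i"
    using truthful by (simp add: chi_def)
  finally show ?thesis .
qed

lemma selected_deviator_no_gain:
  assumes valid: "sym_submod_profile n m v" and "t < n"
    and same: "run n m c p t = run n m c v t" and ne: "active (run n m c v t) \<noteq> {}"
    and agree: "p (selected m v (run n m c v t)) = v (selected m v (run n m c v t))"
  defines "i \<equiv> selected m p (run n m c v t)"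
  shows "iacsm_utility n m c (v i) p i \<le> iacsm_utility n m c (v i) v i"
proof -
  define s where "s = run n m c v t"
  define chi where "chi = share s"
  define i1 where "i1 = selected m v s"
  have "i \<in> active s" "i1 \<in> active s"
    using selected_in_active[OF ne] by (simp_all add: i_def i1_def s_def)
  have "sym_submod_valuation m (v i)"
    using sym_submod_profile_active[OF valid] \<open>i \<in> active s\<close> by (simp add: s_def)
  have final_bundle: "alloc (run n m c p n) i = demand m (p i) chi"
  proof -
    have "run n m c p (Suc t) = assign c s i (demand m (p i) chi)"
      using ne same by (simp add: run_Suc iacsm_step_assign s_def chi_def i_def)
    then show ?thesis
      using alloc_run_inactive[of i n m c p "Suc t" n] \<open>t < n\<close> by simp
  qed
  define k where "k = card (demand m (p i) chi)"
  define k1 where "k1 = card (demand m (v i1) chi)"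
  have "k \<le> k1"
    using card_demand_selected_le[OF \<open>i1 \<in> active s\<close>, of m p] agree
    by (simp add: k_def k1_def i_def i1_def s_def chi_def same)
  moreover have "k1 \<le> demand_size m (v i) chi"
    using card_demand_selected_le[OF \<open>i \<in> active s\<close>, of m v] by (simp add: k1_def i1_def chi_def card_demand)
  ultimately have "cheapest_profit m (v i) chi k \<le> cheapest_profit m (v i) chi k1"
    using sym_submod_valuationD[OF \<open>sym_submod_valuation m (v i)\<close>]
    by (intro cheapest_profit_mono_below_demand_size)
  moreover have "iacsm_utility n m c (v i) p i \<le> cheapest_profit m (v i) chi k"
  proof -
    have "demand m (p i) chi = cheapest m chi k" unfolding k_def by (rule demand_eq_cheapest_card)
    then show ?thesis
      using iacsm_utility_le_earlier_shares[OF less_imp_le[OF \<open>t < n\<close>], of m c "v i" p i] final_bundle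
      by (simp add: same chi_def s_def)
  qed
  moreover have "cheapest_profit m (v i) chi k1 \<le> iacsm_utility n m c (v i) v i"
  proof -
    have "demand m (v i1) chi = cheapest m chi k1" unfolding k1_def by (rule demand_eq_cheapest_card)
    then show ?thesis
      using truthful_utility_ge_assigned_bundle[OF valid \<open>i \<in> active s\<close>[unfolded s_def]]
      by (simp add: chi_def s_def i1_def)
  qed
  ultimately show ?thesis by linarith
qed

theorem mainTheorem7:
  fixes n m :: nat
    and c :: "nat \<Rightarrow> nat set \<Rightarrow> real"
    and v b :: "nat \<Rightarrow> nat set \<Rightarrow> real"
    and Q :: "nat set"
  assumes cost: "\<And>j. j < m \<Longrightarrow> nonneg_on {..<n} (c j) \<and> nondecreasing_on {..<n} (c j)"
    and true_vals: "\<And>i. i < n \<Longrightarrow> sym_submod_valuation m (v i)"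
    and misreports: "\<And>i. i \<in> Q \<Longrightarrow> sym_submod_valuation m (b i)"
    and coalition: "Q \<subseteq> {..<n}" "Q \<noteq> {}"
  shows "\<exists>i\<in>Q. iacsm_utility n m c (v i) (\<lambda>k. if k \<in> Q then b k else v k) i
              \<le> iacsm_utility n m c (v i) v i"
proof -
  define p where "p = (\<lambda>k. if k \<in> Q then b k else v k)"
  have valid: "sym_submod_profile n m v" using true_vals by (simp add: sym_submod_profile_def)
  have "\<exists>i\<in>Q. iacsm_utility n m c (v i) p i \<le> iacsm_utility n m c (v i) v i"
  proof (cases "run n m c p n = run n m c v n")
    case True
    then show ?thesis using coalition(2) by (auto simp: iacsm_utility_run)
  next
    case False
    then obtain t where t: "t < n" "run n m c p t = run n m c v t"
        "run n m c p (Suc t) \<noteq> run n m c v (Suc t)"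
      by (rule first_divergenceE)
    then have ne: "active (run n m c v t) \<noteq> {}" by (auto simp: run_Suc iacsm_step_idle)
    show ?thesis
    proof (cases "selected m v (run n m c v t) \<in> Q")
      case True
      then show ?thesis using selected_truthful_no_gain[OF valid t(1,2) ne] by blast
    next
      case False
      have "selected m p (run n m c v t) \<in> Q"
      proof (rule ccontr)
        assume "selected m p (run n m c v t) \<notin> Q"
        then have "iacsm_step m c p (run n m c v t) = iacsm_step m c v (run n m c v t)"
          using False by (intro iacsm_step_eq_if_selected_agree) (simp_all add: p_def)
        then show False using t(2,3) by (simp add: run_Suc)
      qed
      then show ?thesis using selected_deviator_no_gain[OF valid t(1,2) ne] False by (auto simp: p_def)
    qed
  qed
  then show ?thesis by (simp add: p_def)
qed

end
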